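(* Let $\tilde T_1,\tilde T_2,\dots$ be i.i.d. positive random variables distributed as $\tilde T$, let $\nu$ be independent of them with $\mathbb{P}(\nu=k)=2^{-k}$, $k\ge1$, and let $T=\sum_{i=1}^\nu\tilde T_i$. Let $b>0$. If $\mathbb{P}(\tilde T>\tau)\le e^{-b\tau}$ for all $\tau\ge0$, then $\mathbb{P}(T>\tau)\le e^{-b\tau/2}$ for all $\tau\ge0$. Likewise, if $\mathbb{P}(\tilde T>\tau)\ge e^{-b\tau}$ for all $\tau\ge0$, then $\mathbb{P}(T>\tau)\ge e^{-b\tau/2}$ for all $\tau\ge0$. *)

theory Defs
  imports "HOL-Probability.Probability"
begin

end

theory Submission
  imports Defs
begin

(*
  Let A be the law of the summands. Conditioning on nu gives
  P(T > tau) = sum_k 2^-k P(T_1 + ... + T_k > tau), and the k-th probability is a tail of the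
  k-fold convolution power of A. The hypothesis says that A is stochastically dominated by
  (resp. dominates) the exponential law Exp(b); stochastic dominance is preserved under
  convolution, so every term is bounded by the corresponding Erlang tail. For exponential
  summands the series can be summed in closed form: a geometric(1/2) number of independent
  Exp(b) variables is Exp(b/2), i.e. sum_k 2^-k P(Erlang(k, b) > tau) = exp(-b tau / 2).
*)

definition stochastically_le :: "real measure \<Rightarrow> real measure \<Rightarrow> bool" where
  "stochastically_le M N \<longleftrightarrow> (\<forall>t. emeasure M {t<..} \<le> emeasure N {t<..})"

lemma stochastically_le_iff_measure:
  assumes "finite_measure M" "finite_measure N" "sets M = sets borel" "sets N = sets borel"
  shows "stochastically_le M N \<longleftrightarrow> (\<forall>t. measure M {t<..} \<le> measure N {t<..})"
  using assms by (simp add: stochastically_le_def finite_measure.emeasure_eq_measure)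

lemma emeasure_convolution_greaterThan:
  fixes M N :: "real measure"
  assumes "finite_measure M" "finite_measure N" "sets M = sets borel" "sets N = sets borel"
  shows "emeasure (M \<star> N) {t<..} = (\<integral>\<^sup>+x. emeasure N {t - x<..} \<partial>M)"
proof -
  have "emeasure (M \<star> N) {t<..} = (\<integral>\<^sup>+x. \<integral>\<^sup>+y. indicator {t<..} (x + y) \<partial>N \<partial>M)"
    using assms by (intro convolution_emeasure') auto
  also have "\<dots> = (\<integral>\<^sup>+x. \<integral>\<^sup>+y. indicator {t - x<..} y \<partial>N \<partial>M)"
    by (intro nn_integral_cong) (auto split: split_indicator)
  also have "\<dots> = (\<integral>\<^sup>+x. emeasure N {t - x<..} \<partial>M)"
    using assms by (intro nn_integral_cong) (simp add: sets_eq_imp_space_eq)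
  finally show ?thesis .
qed

lemma stochastically_le_convolution:
  fixes M1 M2 N1 N2 :: "real measure"
  assumes "finite_measure M1" "finite_measure M2" "finite_measure N1" "finite_measure N2"
    and "sets M1 = sets borel" "sets M2 = sets borel" "sets N1 = sets borel" "sets N2 = sets borel"
    and le1: "stochastically_le M1 N1" and le2: "stochastically_le M2 N2"
  shows "stochastically_le (M1 \<star> M2) (N1 \<star> N2)"
  unfolding stochastically_le_def
proof
  fix t
  have "emeasure (M1 \<star> M2) {t<..} = (\<integral>\<^sup>+x. emeasure M2 {t - x<..} \<partial>M1)"
    using assms by (intro emeasure_convolution_greaterThan)
  also have "\<dots> \<le> (\<integral>\<^sup>+x. emeasure N2 {t - x<..} \<partial>M1)"
    using le2 by (intro nn_integral_mono) (simp add: stochastically_le_def)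
  also have "\<dots> = emeasure (M1 \<star> N2) {t<..}"
    using assms by (intro emeasure_convolution_greaterThan[symmetric])
  also have "\<dots> = emeasure (N2 \<star> M1) {t<..}"
    using assms by (simp add: convolution_commutative)
  also have "\<dots> = (\<integral>\<^sup>+x. emeasure M1 {t - x<..} \<partial>N2)"
    using assms by (intro emeasure_convolution_greaterThan)
  also have "\<dots> \<le> (\<integral>\<^sup>+x. emeasure N1 {t - x<..} \<partial>N2)"
    using le1 by (intro nn_integral_mono) (simp add: stochastically_le_def)
  also have "\<dots> = emeasure (N2 \<star> N1) {t<..}"
    using assms by (intro emeasure_convolution_greaterThan[symmetric])
  also have "\<dots> = emeasure (N1 \<star> N2) {t<..}"
    using assms by (simp add: convolution_commutative)
  finally show "emeasure (M1 \<star> M2) {t<..} \<le> emeasure (N1 \<star> N2) {t<..}" .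
qed

text \<open>\<^term>\<open>conv_power M k\<close> is the \<open>(k+1)\<close>-fold convolution power of \<^term>\<open>M\<close>.\<close>

primrec conv_power :: "real measure \<Rightarrow> nat \<Rightarrow> real measure" where
  "conv_power M 0 = M"
| "conv_power M (Suc k) = (M \<star> conv_power M k)"

lemma sets_conv_power: "sets M = sets borel \<Longrightarrow> sets (conv_power M k) = sets borel"
  by (cases k) simp_all

lemma finite_measure_conv_power:
  assumes "finite_measure M" "sets M = sets borel"
  shows "finite_measure (conv_power M k)"
  using assms by (induction k) (simp_all add: convolution_finite sets_conv_power)

lemma stochastically_le_conv_power:
  assumes "finite_measure M" "finite_measure N" "sets M = sets borel" "sets N = sets borel"
    and "stochastically_le M N"
  shows "stochastically_le (conv_power M k) (conv_power N k)"
  using assms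
  by (induction k) (simp_all add: stochastically_le_convolution finite_measure_conv_power sets_conv_power)

lemma stochastically_le_conv_power_mixture:
  assumes "finite_measure M" "finite_measure N" "sets M = sets borel" "sets N = sets borel"
    and "stochastically_le M N" and "\<And>k. 0 \<le> w k"
    and "(\<lambda>k. w k * measure (conv_power M k) {t<..}) sums x"
    and "(\<lambda>k. w k * measure (conv_power N k) {t<..}) sums y"
  shows "x \<le> y"
proof (rule sums_le[OF _ assms(7,8)])
  fix k
  have "stochastically_le (conv_power M k) (conv_power N k)"
    using assms(1-5) by (rule stochastically_le_conv_power)
  then have "measure (conv_power M k) {t<..} \<le> measure (conv_power N k) {t<..}"
    using assms(1-4)
    by (simp add: stochastically_le_iff_measure finite_measure_conv_power sets_conv_power)
  then show "w k * measure (conv_power M k) {t<..} \<le> w k * measure (conv_power N k) {t<..}"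
    using assms(6) by (rule mult_left_mono)
qed

lemma conv_power_exponential:
  assumes "0 < b"
  shows "conv_power (density lborel (exponential_density b)) k = density lborel (erlang_density k b)"
proof (induction k)
  case (Suc k)
  have fin: "finite_measure (density lborel (erlang_density n b))" for n
    using prob_space_erlang_density[OF assms] by (rule prob_space.finite_measure)
  have "conv_power (density lborel (exponential_density b)) (Suc k) =
      (density lborel (erlang_density k b) \<star> density lborel (exponential_density b))"
    using Suc fin by (simp add: convolution_commutative)
  also have "\<dots> = density lborel (erlang_density (Suc k) b)"
    using fin assms by (simp add: convolution_density convolution_erlang_density)
  finally show ?case .
qed simp

lemma measure_erlang_greaterThan:
  assumes "0 < b"
  shows "measure (density lborel (erlang_density k b)) {t<..} = 1 - erlang_CDF k b t"
proof -
  interpret prob_space "density lborel (erlang_density k b)"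
    using assms by (rule prob_space_erlang_density)
  have "prob {t<..} = 1 - prob {..t}"
    using prob_compl[of "{..t}"] by (simp add: Compl_eq_Diff_UNIV[symmetric])
  then show ?thesis
    using assms by (simp add: measure_def emeasure_erlang_density)
qed

lemma geometric_mixture_partial_sum:
  fixes c :: "nat \<Rightarrow> 'a::comm_ring_1"
  shows "(\<Sum>m<N. (1 - p) * p ^ m * (\<Sum>n\<le>m. c n)) = (\<Sum>n<N. c n * p ^ n) - p ^ N * (\<Sum>n<N. c n)"
proof (induction N)
  case (Suc N)
  then show ?case
    by (simp add: lessThan_Suc_atMost[symmetric] algebra_simps)
qed simp

lemma geometric_mixture_sums:
  fixes c :: "nat \<Rightarrow> 'a::real_normed_field"
  assumes "summable c" and "norm p < 1" and "(\<lambda>n. c n * p ^ n) sums s"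
  shows "(\<lambda>m. (1 - p) * p ^ m * (\<Sum>n\<le>m. c n)) sums s"
proof -
  have "(\<lambda>N. p ^ N * (\<Sum>n<N. c n)) \<longlonglongrightarrow> 0 * suminf c"
    using assms(1,2) by (intro tendsto_mult LIMSEQ_power_zero summable_LIMSEQ)
  with assms(3) have "(\<lambda>N. (\<Sum>n<N. c n * p ^ n) - p ^ N * (\<Sum>n<N. c n)) \<longlonglongrightarrow> s - 0 * suminf c"
    unfolding sums_def by (intro tendsto_diff)
  then show ?thesis
    unfolding sums_def geometric_mixture_partial_sum by simp
qed

lemma geometric_mixture_erlang_tail:
  assumes "0 \<le> \<tau>"
  shows "(\<lambda>k. (1/2) ^ Suc k * (1 - erlang_CDF k b \<tau>)) sums exp (- b * \<tau> / 2)"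
proof -
  define c where "c n = exp (- b * \<tau>) * ((b * \<tau>) ^ n /\<^sub>R fact n)" for n
  have "c sums (exp (- b * \<tau>) * exp (b * \<tau>))"
    unfolding c_def by (intro sums_mult exp_converges)
  moreover have "(\<lambda>n. c n * (1/2) ^ n) sums (exp (- b * \<tau>) * exp (b * \<tau> / 2))"
    using sums_mult[OF exp_converges[of "b * \<tau> / 2"], of "exp (- b * \<tau>)"]
    by (simp add: c_def power_divide)
  moreover have "exp (- b * \<tau>) * exp (b * \<tau> / 2) = exp (- b * \<tau> / 2)"
    by (simp flip: exp_add)
  ultimately have "(\<lambda>m. (1 - 1/2) * (1/2) ^ m * (\<Sum>n\<le>m. c n)) sums exp (- b * \<tau> / 2)"
    by (intro geometric_mixture_sums) (auto simp: sums_summable)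
  moreover have "(\<Sum>n\<le>m. c n) = 1 - erlang_CDF m b \<tau>" for m
    using assms by (simp add: erlang_CDF_def c_def sum_distrib_left field_simps)
  ultimately show ?thesis
    by simp
qed

lemma (in prob_space) distr_partial_sum_conv_power:
  fixes X :: "nat \<Rightarrow> 'a \<Rightarrow> real"
  assumes X: "\<And>i. random_variable borel (X i)"
    and indep: "\<And>k. indep_var borel (X (Suc k)) borel (\<lambda>\<omega>. \<Sum>i<Suc k. X i \<omega>)"
    and identical: "\<And>i. distr M borel (X i) = distr M borel (X 0)"
  shows "distr M borel (\<lambda>\<omega>. \<Sum>i<Suc k. X i \<omega>) = conv_power (distr M borel (X 0)) k"
proof (induction k)
  case (Suc k)
  have "distr M borel (\<lambda>\<omega>. \<Sum>i<Suc (Suc k). X i \<omega>) =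
      distr M borel (\<lambda>\<omega>. X (Suc k) \<omega> + (\<Sum>i<Suc k. X i \<omega>))"
    by (simp add: add.commute)
  also have "\<dots> = (distr M borel (X (Suc k)) \<star> distr M borel (\<lambda>\<omega>. \<Sum>i<Suc k. X i \<omega>))"
    using X by (intro sum_indep_random_variable indep) auto
  finally show ?case
    by (simp only: Suc identical[of "Suc k"] conv_power.simps)
qed simp

lemma (in prob_space) random_index_tail_sums:
  fixes S :: "nat \<Rightarrow> 'a \<Rightarrow> real" and N :: "'a \<Rightarrow> nat"
  assumes [measurable]: "N \<in> measurable M (count_space UNIV)" "\<And>k. random_variable borel (S k)"
    and indep: "\<And>k. indep_var borel (\<lambda>\<omega>. real (N \<omega>)) borel (S k)"
  shows "(\<lambda>k. prob {\<omega> \<in> space M. N \<omega> = k} * prob {\<omega> \<in> space M. \<tau> < S k \<omega>})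
    sums prob {\<omega> \<in> space M. \<tau> < S (N \<omega>) \<omega>}"
proof -
  define E where "E k = {\<omega> \<in> space M. N \<omega> = k \<and> \<tau> < S k \<omega>}" for k
  have "E k \<in> events" for k
    unfolding E_def by measurable
  then have "(\<lambda>k. prob (E k)) sums prob (\<Union>k. E k)"
    by (intro finite_measure_UNION) (auto simp: E_def disjoint_family_on_def)
  moreover have "(\<Union>k. E k) = {\<omega> \<in> space M. \<tau> < S (N \<omega>) \<omega>}"
    by (auto simp: E_def)
  moreover have "prob (E k) = prob {\<omega> \<in> space M. N \<omega> = k} * prob {\<omega> \<in> space M. \<tau> < S k \<omega>}" for k
  proof -
    have "prob ((\<lambda>\<omega>. (real (N \<omega>), S k \<omega>)) -` ({real k} \<times> {\<tau><..}) \<inter> space M) =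
        prob ((\<lambda>\<omega>. real (N \<omega>)) -` {real k} \<inter> space M) * prob (S k -` {\<tau><..} \<inter> space M)"
      by (rule indep_varD[OF indep]) auto
    then show ?thesis
      by (simp add: E_def vimage_def Int_def conj_commute)
  qed
  ultimately show ?thesis
    by simp
qed

lemma (in prob_space) geometric_random_sum_tail:
  fixes X :: "nat \<Rightarrow> 'a \<Rightarrow> real" and N :: "'a \<Rightarrow> nat"
  assumes [measurable]: "\<And>i. random_variable borel (X i)" "N \<in> measurable M (count_space UNIV)"
    and indep: "indep_vars (\<lambda>_. borel) (\<lambda>j. case j of None \<Rightarrow> (\<lambda>\<omega>. real (N \<omega>)) | Some i \<Rightarrow> X i) UNIV"
    and identical: "\<And>i. distr M borel (X i) = distr M borel (X 0)"
    and geometric: "\<And>k. k \<ge> 1 \<Longrightarrow> prob {\<omega> \<in> space M. N \<omega> = k} = 1 / 2 ^ k"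
    and "0 \<le> \<tau>"
  shows "(\<lambda>k. (1/2) ^ Suc k * measure (conv_power (distr M borel (X 0)) k) {\<tau><..})
    sums prob {\<omega> \<in> space M. \<tau> < (\<Sum>i<N \<omega>. X i \<omega>)}"
proof -
  let ?Y = "\<lambda>j. case j of None \<Rightarrow> (\<lambda>\<omega>. real (N \<omega>)) | Some i \<Rightarrow> X i"
  have indep_partial_sum: "indep_var borel (?Y j) borel (\<lambda>\<omega>. \<Sum>i<k. X i \<omega>)"
    if "j \<notin> Some ` {..<k}" for j k
  proof -
    have "indep_var borel (?Y j) borel (\<lambda>\<omega>. \<Sum>i\<in>Some ` {..<k}. ?Y i \<omega>)"
      using that by (intro indep_vars_sum indep_vars_subset[OF indep]) auto
    then show ?thesis
      by (simp add: sum.reindex)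
  qed
  have "indep_var borel (X (Suc k)) borel (\<lambda>\<omega>. \<Sum>i<Suc k. X i \<omega>)" for k
    using indep_partial_sum[of "Some (Suc k)" "Suc k"] by (simp add: image_iff)
  then have law: "distr M borel (\<lambda>\<omega>. \<Sum>i<Suc k. X i \<omega>) = conv_power (distr M borel (X 0)) k" for k
    using identical by (intro distr_partial_sum_conv_power) auto
  define f where
    "f k = prob {\<omega> \<in> space M. N \<omega> = k} * prob {\<omega> \<in> space M. \<tau> < (\<Sum>i<k. X i \<omega>)}" for k
  have "f sums prob {\<omega> \<in> space M. \<tau> < (\<Sum>i<N \<omega>. X i \<omega>)}"
    unfolding f_def using indep_partial_sum[of None] by (intro random_index_tail_sums) auto
  moreover have "f 0 = 0"
    using \<open>0 \<le> \<tau>\<close> by (simp add: f_def)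
  ultimately have "(\<lambda>k. f (Suc k)) sums prob {\<omega> \<in> space M. \<tau> < (\<Sum>i<N \<omega>. X i \<omega>)}"
    by (simp add: sums_Suc_iff)
  moreover have
    "f (Suc k) = (1/2) ^ Suc k * measure (conv_power (distr M borel (X 0)) k) {\<tau><..}" for k
    using geometric[of "Suc k"]
    by (simp add: f_def law[symmetric] measure_distr vimage_def Int_def conj_commute power_one_over)
  ultimately show ?thesis
    by simp
qed

theorem proposition6:
  fixes M :: "'a measure" and Tt :: "nat \<Rightarrow> 'a \<Rightarrow> real" and nu :: "'a \<Rightarrow> nat" and b :: real
  assumes "prob_space M"
    and rv: "\<And>i. Tt i \<in> borel_measurable M"
    and nu_meas: "nu \<in> measurable M (count_space UNIV)"
    and indep: "prob_space.indep_vars M (\<lambda>_. borel)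
                  (\<lambda>j. case j of None \<Rightarrow> (\<lambda>\<omega>. real (nu \<omega>)) | Some i \<Rightarrow> Tt i) UNIV"
    and iid_distr: "\<And>i. distr M borel (Tt i) = distr M borel (Tt 0)"
    and pos: "\<And>i. AE \<omega> in M. Tt i \<omega> > 0"
    and nu_distr: "\<And>k::nat. k \<ge> 1 \<Longrightarrow> measure M {\<omega> \<in> space M. nu \<omega> = k} = 1 / 2 ^ k"
    and b: "b > 0"
  defines "T \<equiv> (\<lambda>\<omega>. \<Sum>i<nu \<omega>. Tt i \<omega>)"
  shows "((\<forall>\<tau>\<ge>0. measure M {\<omega> \<in> space M. Tt 0 \<omega> > \<tau>} \<le> exp (- b * \<tau>))
            \<longrightarrow> (\<forall>\<tau>\<ge>0. measure M {\<omega> \<in> space M. T \<omega> > \<tau>} \<le> exp (- b * \<tau> / 2)))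
       \<and> ((\<forall>\<tau>\<ge>0. measure M {\<omega> \<in> space M. Tt 0 \<omega> > \<tau>} \<ge> exp (- b * \<tau>))
            \<longrightarrow> (\<forall>\<tau>\<ge>0. measure M {\<omega> \<in> space M. T \<omega> > \<tau>} \<ge> exp (- b * \<tau> / 2)))"
proof -
  interpret prob_space M by fact
  note [measurable] = rv
  define A where "A = distr M borel (Tt 0)"
  define E where "E = density lborel (exponential_density b)"
  have A: "finite_measure A" "sets A = sets borel"
    unfolding A_def by (auto intro!: prob_space.finite_measure prob_space_distr)
  have E: "finite_measure E" "sets E = sets borel"
    unfolding E_def using prob_space_exponential_density[OF b]
    by (auto intro: prob_space.finite_measure)
  have tail_A: "measure A {t<..} = prob {\<omega> \<in> space M. Tt 0 \<omega> > t}" for t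
    unfolding A_def by (simp add: measure_distr vimage_def Int_def conj_commute)
  have tail_E: "measure E {t<..} = (if t < 0 then 1 else exp (- b * t))" for t
    using measure_erlang_greaterThan[OF b, of 0 t] by (simp add: E_def erlang_CDF_def)
  have tail_T:
    "(\<lambda>k. (1/2) ^ Suc k * measure (conv_power A k) {\<tau><..}) sums prob {\<omega> \<in> space M. T \<omega> > \<tau>}"
    if "0 \<le> \<tau>" for \<tau>
    unfolding A_def T_def using that by (intro geometric_random_sum_tail rv nu_meas indep iid_distr nu_distr)
  have tail_T_exp: "(\<lambda>k. (1/2) ^ Suc k * measure (conv_power E k) {\<tau><..}) sums exp (- b * \<tau> / 2)"
    if "0 \<le> \<tau>" for \<tau>
    using geometric_mixture_erlang_tail[OF that, of b]
    by (simp add: E_def conv_power_exponential[OF b] measure_erlang_greaterThan[OF b])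
  have "stochastically_le A E"
    if "\<forall>\<tau>\<ge>0. prob {\<omega> \<in> space M. Tt 0 \<omega> > \<tau>} \<le> exp (- b * \<tau>)"
    using that by (simp add: stochastically_le_iff_measure A E tail_A tail_E)
  moreover have "stochastically_le E A"
    if "\<forall>\<tau>\<ge>0. prob {\<omega> \<in> space M. Tt 0 \<omega> > \<tau>} \<ge> exp (- b * \<tau>)"
  proof -
    \<comment> \<open>Positivity of the summands is needed only here: the exponential tail is 1 below 0.\<close>
    have "prob {\<omega> \<in> space M. Tt 0 \<omega> > t} = 1" if "t < 0" for t
      using pos[of 0] that by (subst prob_Collect_eq_1) (auto elim!: AE_mp)
    then show ?thesis
      using that by (simp add: stochastically_le_iff_measure A E tail_A tail_E)
  qed
  ultimately show ?thesis
    using stochastically_le_conv_power_mixture[OF A(1) E(1) A(2) E(2)]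
      stochastically_le_conv_power_mixture[OF E(1) A(1) E(2) A(2)]
      tail_T tail_T_exp by (meson zero_le_divide_1_iff zero_le_numeral zero_le_power)
qed

end
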